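(* For every $T\in\mathcal{D}_H'(\mathbb{R}^d)$ the map $M_T:\mathcal{D}(\mathbb{R}^d)\to\mathcal{D}(\mathbb{R}^d)$ is a continuous linear operator.
   Context: $\mathbb{R}_*=\mathbb{R}\setminus\{0\}$; $\xi y=(\xi_1y_1,\dots,\xi_dy_d)$. $\mathcal{D}_H'(\mathbb{R}^d)$ is the set of distributions $T\in\mathcal{D}'(\mathbb{R}^d)$ such that for every $\varphi\in\mathcal{D}(\mathbb{R}^d)$ the function $y\mapsto T_\xi\varphi(\xi y)$, $y\in\mathbb{R}_*^d$, is the restriction of a function in $\mathcal{D}(\mathbb{R}^d)$. For $T\in\mathcal{D}_H'(\mathbb{R}^d)$, $M_T\varphi$ denotes this (unique continuous) extension. *)

theory Defs
  imports "HOL-Analysis.Analysis"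
begin

text \<open>Test functions on R^d (complex valued), the index type 'd stands for {1..d}.\<close>

definition pdiff :: "'d::finite \<Rightarrow> (real^'d \<Rightarrow> complex) \<Rightarrow> (real^'d \<Rightarrow> complex)" where
  "pdiff i f = (\<lambda>x. frechet_derivative f (at x) (axis i 1))"

fun Dmulti :: "'d::finite list \<Rightarrow> (real^'d \<Rightarrow> complex) \<Rightarrow> (real^'d \<Rightarrow> complex)" where
  "Dmulti [] f = f"
| "Dmulti (i # is) f = pdiff i (Dmulti is f)"

definition smooth :: "(real^'d::finite \<Rightarrow> complex) \<Rightarrow> bool" where
  "smooth f \<longleftrightarrow> (\<forall>is x. Dmulti is f differentiable (at x))"

definition tsupport :: "(real^'d::finite \<Rightarrow> complex) \<Rightarrow> (real^'d) set" where
  "tsupport f = closure {x. f x \<noteq> 0}"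

definition test_fun :: "(real^'d::finite \<Rightarrow> complex) \<Rightarrow> bool" where
  "test_fun f \<longleftrightarrow> smooth f \<and> compact (tsupport f)"

definition D_conv :: "(nat \<Rightarrow> real^'d::finite \<Rightarrow> complex) \<Rightarrow> (real^'d \<Rightarrow> complex) \<Rightarrow> bool" where
  "D_conv \<phi> \<psi> \<longleftrightarrow> (\<forall>n. test_fun (\<phi> n)) \<and> test_fun \<psi> \<and>
     (\<exists>K. compact K \<and> (\<forall>n. tsupport (\<phi> n) \<subseteq> K)) \<and>
     (\<forall>is. uniform_limit UNIV (\<lambda>n. Dmulti is (\<phi> n)) (Dmulti is \<psi>) sequentially)"

text \<open>Linear maps on D are continuous iff sequentially continuous (D is an LF space).\<close>
definition D_linear :: "((real^'d::finite \<Rightarrow> complex) \<Rightarrow> complex) \<Rightarrow> bool" where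
  "D_linear L \<longleftrightarrow> (\<forall>f g. test_fun f \<longrightarrow> test_fun g \<longrightarrow> L (\<lambda>x. f x + g x) = L f + L g) \<and>
     (\<forall>c f. test_fun f \<longrightarrow> L (\<lambda>x. c * f x) = c * L f)"

definition distribution :: "((real^'d::finite \<Rightarrow> complex) \<Rightarrow> complex) \<Rightarrow> bool" where
  "distribution T \<longleftrightarrow> D_linear T \<and>
     (\<forall>\<phi> \<psi>. D_conv \<phi> \<psi> \<longrightarrow> (\<lambda>n. T (\<phi> n)) \<longlonglongrightarrow> T \<psi>)"

definition Rstar :: "(real^'d::finite) set" where
  "Rstar = {y. \<forall>i. y $ i \<noteq> 0}"

definition cmul :: "real^'d::finite \<Rightarrow> real^'d \<Rightarrow> real^'d" where
  "cmul \<xi> y = (\<chi> i. \<xi> $ i * y $ i)"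

definition DH' :: "((real^'d::finite \<Rightarrow> complex) \<Rightarrow> complex) set" where
  "DH' = {T. distribution T \<and>
     (\<forall>\<phi>. test_fun \<phi> \<longrightarrow> (\<exists>g. test_fun g \<and> (\<forall>y\<in>Rstar. g y = T (\<lambda>\<xi>. \<phi> (cmul \<xi> y)))))}"

text \<open>M_T phi: the (unique) test function extending y \<mapsto> T_xi phi(xi y) from R_*^d.\<close>
definition M_op :: "((real^'d::finite \<Rightarrow> complex) \<Rightarrow> complex) \<Rightarrow> (real^'d \<Rightarrow> complex) \<Rightarrow> (real^'d \<Rightarrow> complex)" where
  "M_op T \<phi> = (SOME g. test_fun g \<and> (\<forall>y\<in>Rstar. g y = T (\<lambda>\<xi>. \<phi> (cmul \<xi> y))))"

end

theory Submission
  imports Defs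
begin

(* Linearity of M_T is inherited from T, since two continuous functions that agree on the dense
   set R_*^d coincide.  For continuity fix a compact K; the test functions supported in K form a
   complete metric space D_K.  For every order k, the sets C_m of those phi for which M_T phi
   vanishes outside the ball of radius m and has all derivatives of order at most k bounded by m
   exhaust D_K.  They are closed, although M_T phi_n -> M_T phi is only known pointwise on R_*^d
   (this is the sequential continuity of T): a bound on a derivative is equivalent to the same
   bound on all iterated difference quotients, and these are read off on translates of R_*^d.
   By Baire's theorem some C_m has interior, and linearity turns this into a bound on a
   neighbourhood of 0 in D_K.  Rescaling then yields a common compact support for the M_T phi_n
   and uniform convergence of all their derivatives. *)

section \<open>Derivatives of test functions\<close>

lemma pdiff_has_derivative: "(f has_derivative f') (at x) \<Longrightarrow> pdiff i f x = f' (axis i 1)"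
  unfolding pdiff_def by (metis frechet_derivative_at)

lemma smooth_has_derivative:
  "smooth f \<Longrightarrow> (Dmulti is f has_derivative frechet_derivative (Dmulti is f) (at x)) (at x)"
  unfolding smooth_def using frechet_derivative_works by blast

lemma Dmulti_lincomb:
  assumes "smooth f" "smooth g"
  shows "Dmulti is (\<lambda>x. a * f x + b * g x) = (\<lambda>x. a * Dmulti is f x + b * Dmulti is g x)"
proof (induction "is")
  case (Cons i "is")
  show ?case
  proof
    fix x
    have df: "(Dmulti is f has_derivative frechet_derivative (Dmulti is f) (at x)) (at x)"
      and dg: "(Dmulti is g has_derivative frechet_derivative (Dmulti is g) (at x)) (at x)"
      using assms smooth_has_derivative by blast+
    have "((\<lambda>x. a * Dmulti is f x + b * Dmulti is g x) has_derivative
       (\<lambda>h. a * frechet_derivative (Dmulti is f) (at x) h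
          + b * frechet_derivative (Dmulti is g) (at x) h)) (at x)"
      by (intro derivative_intros df dg)
    then show "Dmulti (i # is) (\<lambda>x. a * f x + b * g x) x
        = a * Dmulti (i # is) f x + b * Dmulti (i # is) g x"
      using Cons by (simp add: pdiff_has_derivative[OF df] pdiff_has_derivative[OF dg]
          pdiff_has_derivative)
  qed
qed simp

lemma smooth_lincomb:
  assumes "smooth f" "smooth g"
  shows "smooth (\<lambda>x. a * f x + b * g x)"
  using assms unfolding smooth_def Dmulti_lincomb[OF assms] by (auto intro!: derivative_intros)

lemma Dmulti_cmult: "smooth f \<Longrightarrow> Dmulti is (\<lambda>x. c * f x) = (\<lambda>x. c * Dmulti is f x)"
  using Dmulti_lincomb[of f f "is" c 0] by simp

lemma Dmulti_zero: "Dmulti is (\<lambda>x. 0) = (\<lambda>x. 0)"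
proof (induction "is")
  case (Cons i "is")
  have "((\<lambda>x::real^'a. 0::complex) has_derivative (\<lambda>h. 0)) (at x)" for x
    by simp
  then have "pdiff i (\<lambda>x::real^'a. 0::complex) x = 0" for x
    using pdiff_has_derivative by metis
  then show ?case using Cons by auto
qed simp

lemma Dmulti_cong_open:
  assumes "open U" "\<And>x. x \<in> U \<Longrightarrow> f x = g x" "x \<in> U"
  shows "Dmulti is f x = Dmulti is g x"
  using assms(3)
proof (induction "is" arbitrary: x)
  case (Cons i "is")
  have "(Dmulti is f has_derivative f') (at x) \<longleftrightarrow> (Dmulti is g has_derivative f') (at x)" for f'
    using has_derivative_transform_within_open[OF _ assms(1) Cons.prems] Cons.IH by metis
  then show ?case by (simp add: pdiff_def frechet_derivative_def)
qed (use assms in simp)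

lemma Dmulti_translate:
  assumes "smooth f"
  shows "Dmulti is (\<lambda>x. f (x + a)) = (\<lambda>x. Dmulti is f (x + a))"
proof (induction "is")
  case (Cons i "is")
  show ?case
  proof
    fix x
    have df: "(Dmulti is f has_derivative frechet_derivative (Dmulti is f) (at (x + a))) (at (x + a))"
      using assms smooth_has_derivative by blast
    have "((\<lambda>x. Dmulti is f (x + a)) has_derivative frechet_derivative (Dmulti is f) (at (x + a))) (at x)"
      using has_derivative_compose[OF has_derivative_add_const[OF has_derivative_ident] df] by simp
    then show "Dmulti (i # is) (\<lambda>x. f (x + a)) x = Dmulti (i # is) f (x + a)"
      using Cons by (simp add: pdiff_has_derivative[OF df] pdiff_has_derivative)
  qed
qed simp

lemma smooth_translate:
  assumes "smooth f" shows "smooth (\<lambda>x. f (x + a))"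
  using assms unfolding smooth_def Dmulti_translate[OF assms]
  by (auto intro!: differentiable_compose[where g = "\<lambda>x. x + a"] derivative_intros)

lemma bounded_linear_cmul: "bounded_linear (\<lambda>h. cmul h y)"
  unfolding linear_conv_bounded_linear[symmetric]
  by (rule linearI) (auto simp: cmul_def vec_eq_iff algebra_simps)

lemma cmul_axis: "cmul (axis i 1) y = (y $ i) *\<^sub>R axis i 1"
  by (auto simp: cmul_def vec_eq_iff axis_def)

lemma Dmulti_dilate:
  assumes "smooth f"
  shows "Dmulti is (\<lambda>\<xi>. f (cmul \<xi> y))
    = (\<lambda>\<xi>. of_real (\<Prod>i\<leftarrow>is. y $ i) * Dmulti is f (cmul \<xi> y))"
proof (induction "is")
  case (Cons i "is")
  show ?case
  proof
    fix x
    let ?c = "of_real (\<Prod>i\<leftarrow>is. y $ i) :: complex"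
    let ?D = "frechet_derivative (Dmulti is f) (at (cmul x y))"
    have df: "(Dmulti is f has_derivative ?D) (at (cmul x y))"
      using assms smooth_has_derivative by blast
    have "((\<lambda>x. Dmulti is f (cmul x y)) has_derivative (\<lambda>h. ?D (cmul h y))) (at x)"
      using has_derivative_compose[OF bounded_linear_imp_has_derivative[OF bounded_linear_cmul] df]
      by simp
    then have "((\<lambda>x. ?c * Dmulti is f (cmul x y)) has_derivative (\<lambda>h. ?c * ?D (cmul h y))) (at x)"
      by (intro derivative_intros)
    then have "pdiff i (\<lambda>x. ?c * Dmulti is f (cmul x y)) x = ?c * ?D ((y $ i) *\<^sub>R axis i 1)"
      by (simp add: pdiff_has_derivative cmul_axis)
    also have "\<dots> = ?c * of_real (y $ i) * pdiff i (Dmulti is f) (cmul x y)"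
      using linear_scale[OF has_derivative_linear[OF df]] by (simp add: pdiff_def scaleR_conv_of_real)
    finally show "Dmulti (i # is) (\<lambda>\<xi>. f (cmul \<xi> y)) x
        = of_real (\<Prod>i\<leftarrow>i # is. y $ i) * Dmulti (i # is) f (cmul x y)"
      using Cons by (simp add: mult_ac)
  qed
qed simp

lemma smooth_dilate:
  assumes "smooth f" shows "smooth (\<lambda>\<xi>. f (cmul \<xi> y))"
  unfolding smooth_def Dmulti_dilate[OF assms]
proof (intro allI)
  fix "is" x
  have "Dmulti is f differentiable (at (cmul x y))"
    using assms by (simp add: smooth_def)
  then have "(\<lambda>\<xi>. Dmulti is f (cmul \<xi> y)) differentiable (at x)"
    by (rule differentiable_compose)
      (rule bounded_linear_imp_differentiable[OF bounded_linear_cmul])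
  then show "(\<lambda>\<xi>. of_real (\<Prod>i\<leftarrow>is. y $ i) * Dmulti is f (cmul \<xi> y)) differentiable (at x)"
    by (intro derivative_intros)
qed

section \<open>Supports, boundedness and dilations\<close>

lemma closed_tsupport [simp]: "closed (tsupport f)"
  by (simp add: tsupport_def)

lemma notin_tsupport: "x \<notin> tsupport f \<Longrightarrow> f x = 0"
  unfolding tsupport_def using closure_subset[of "{x. f x \<noteq> 0}"] by auto

lemma tsupport_subset_closed: "closed K \<Longrightarrow> (\<And>x. x \<notin> K \<Longrightarrow> f x = 0) \<Longrightarrow> tsupport f \<subseteq> K"
  unfolding tsupport_def by (rule closure_minimal) auto

lemma compact_tsupport_subset: "compact K \<Longrightarrow> tsupport f \<subseteq> K \<Longrightarrow> compact (tsupport f)"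
  by (metis closed_tsupport compact_Int_closed inf.absorb_iff2)

lemma tsupport_Dmulti: "tsupport (Dmulti is f) \<subseteq> tsupport f"
proof (rule tsupport_subset_closed[OF closed_tsupport])
  fix x assume "x \<notin> tsupport f"
  then have "Dmulti is f x = Dmulti is (\<lambda>x. 0) x"
    by (intro Dmulti_cong_open[of "- tsupport f"]) (auto intro: notin_tsupport)
  then show "Dmulti is f x = 0" by (simp add: Dmulti_zero)
qed

lemma tsupport_lincomb: "tsupport (\<lambda>x. a * f x + b * g x) \<subseteq> tsupport f \<union> tsupport g"
  by (rule tsupport_subset_closed) (auto simp: notin_tsupport)

lemma test_fun_lincomb:
  assumes "test_fun f" "test_fun g"
  shows "test_fun (\<lambda>x. a * f x + b * g x)"
  using assms compact_tsupport_subset[OF _ tsupport_lincomb] smooth_lincomb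
  unfolding test_fun_def by blast

lemma test_fun_cmult: "test_fun f \<Longrightarrow> test_fun (\<lambda>x. c * f x)"
  using test_fun_lincomb[of f f c 0] by simp

lemma test_fun_zero: "test_fun (\<lambda>x. 0)"
  unfolding test_fun_def smooth_def tsupport_def Dmulti_zero by auto

lemma continuous_Dmulti: "smooth f \<Longrightarrow> continuous (at x) (Dmulti is f)"
  unfolding smooth_def using differentiable_imp_continuous_within by blast

lemma test_fun_continuous: "test_fun f \<Longrightarrow> continuous (at x) f"
  using continuous_Dmulti[of f x "[]"] by (simp add: test_fun_def)

lemma bounded_Dmulti:
  assumes "test_fun f"
  shows "\<exists>B. \<forall>x. cmod (Dmulti is f x) \<le> B"
proof -
  have "compact (Dmulti is f ` tsupport f)"
    using assms continuous_Dmulti unfolding test_fun_def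
    by (metis compact_continuous_image continuous_at_imp_continuous_on)
  then obtain B where B: "\<And>x. x \<in> tsupport f \<Longrightarrow> cmod (Dmulti is f x) \<le> B"
    by (meson bounded_iff compact_imp_bounded image_eqI)
  have "cmod (Dmulti is f x) \<le> max B 0" for x
    using B[of x] notin_tsupport[of x "Dmulti is f"] tsupport_Dmulti[of "is" f] by force
  then show ?thesis by blast
qed

definition cinv :: "real^'d::finite \<Rightarrow> real^'d" where
  "cinv y = (\<chi> i. 1 / y $ i)"

lemma cmul_cmul_cinv: "y \<in> Rstar \<Longrightarrow> cmul (cmul \<xi> y) (cinv y) = \<xi>"
  by (auto simp: cmul_def cinv_def Rstar_def vec_eq_iff)

lemma tsupport_dilate:
  assumes "y \<in> Rstar"
  shows "tsupport (\<lambda>\<xi>. f (cmul \<xi> y)) \<subseteq> (\<lambda>x. cmul x (cinv y)) ` tsupport f"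
proof -
  have "closed ((\<lambda>\<xi>. cmul \<xi> y) -` tsupport f)"
    by (intro continuous_closed_vimage closed_tsupport linear_continuous_at bounded_linear_cmul)
  then have "tsupport (\<lambda>\<xi>. f (cmul \<xi> y)) \<subseteq> (\<lambda>\<xi>. cmul \<xi> y) -` tsupport f"
    by (rule tsupport_subset_closed) (auto intro: notin_tsupport)
  also have "\<dots> \<subseteq> (\<lambda>x. cmul x (cinv y)) ` tsupport f"
    using cmul_cmul_cinv[OF assms] by (metis image_eqI subsetI vimageE)
  finally show ?thesis .
qed

lemma compact_dilate_image: "compact K \<Longrightarrow> compact ((\<lambda>x. cmul x z) ` K)"
  by (intro compact_continuous_image linear_continuous_on bounded_linear_cmul)

lemma test_fun_dilate:
  assumes "test_fun f" "y \<in> Rstar"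
  shows "test_fun (\<lambda>\<xi>. f (cmul \<xi> y))"
  using assms compact_dilate_image compact_tsupport_subset[OF _ tsupport_dilate] smooth_dilate
  unfolding test_fun_def by blast

section \<open>Density of \<open>Rstar\<close>\<close>

lemma eventually_shift_in_Rstar:
  fixes x :: "real^'d::finite"
  assumes "finite A"
  shows "\<forall>\<^sub>F t in at_right 0. \<forall>a\<in>A. x + t *\<^sub>R 1 + a \<in> Rstar"
proof -
  define S where "S = (\<lambda>(i, a). \<bar>x $ i + a $ i\<bar>) ` {(i, a). a \<in> A \<and> x $ i + a $ i \<noteq> 0}"
  have "finite S" unfolding S_def
    by (rule finite_imageI, rule finite_subset[of _ "UNIV \<times> A"]) (use assms in auto)
  define \<delta> where "\<delta> = Min (insert 1 S)"
  have "\<delta> > 0" unfolding \<delta>_def using \<open>finite S\<close> by (auto simp: S_def)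
  have \<delta>_le: "\<delta> \<le> \<bar>x $ i + a $ i\<bar>" if "a \<in> A" "x $ i + a $ i \<noteq> 0" for i a
    unfolding \<delta>_def using \<open>finite S\<close> that by (intro Min_le) (auto simp: S_def)
  have "x + t *\<^sub>R 1 + a \<in> Rstar" if "0 < t" "t < \<delta>" "a \<in> A" for t a
    unfolding Rstar_def
  proof (intro CollectI allI)
    fix i
    have "(x + t *\<^sub>R 1 + a) $ i = (x $ i + a $ i) + t" by simp
    then show "(x + t *\<^sub>R 1 + a) $ i \<noteq> 0"
      using that \<delta>_le[of a i] by (cases "x $ i + a $ i = 0") linarith+
  qed
  then show ?thesis
    unfolding eventually_at_right_field using \<open>\<delta> > 0\<close> by auto
qed

lemma norm_le_from_shifted_Rstar:
  fixes F :: "real^'d::finite \<Rightarrow> complex"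
  assumes cont: "continuous (at y) F" and "finite A" "open U" "y \<in> U"
    and bound: "\<And>z. z \<in> U \<Longrightarrow> (\<forall>a\<in>A. z + a \<in> Rstar) \<Longrightarrow> cmod (F z) \<le> B"
  shows "cmod (F y) \<le> B"
proof -
  have diag: "((\<lambda>t. y + t *\<^sub>R 1) \<longlongrightarrow> y) (at_right 0)"
    by (intro tendsto_eq_intros) auto
  then have "((\<lambda>t. cmod (F (y + t *\<^sub>R 1))) \<longlongrightarrow> cmod (F y)) (at_right 0)"
    using cont by (intro tendsto_norm isCont_tendsto_compose[of y F]) (auto simp: continuous_at)
  moreover have "\<forall>\<^sub>F t in at_right 0. y + t *\<^sub>R 1 \<in> U"
    using topological_tendstoD[OF diag assms(3,4)] .
  then have "\<forall>\<^sub>F t in at_right 0. cmod (F (y + t *\<^sub>R 1)) \<le> B"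
    using eventually_shift_in_Rstar[OF assms(2), of y]
    by eventually_elim (simp add: bound add.assoc)
  ultimately show ?thesis
    by (rule tendsto_upperbound) simp
qed

lemma continuous_eq_on_Rstar:
  fixes f g :: "real^'d::finite \<Rightarrow> complex"
  assumes "\<And>x. continuous (at x) f" "\<And>x. continuous (at x) g" "\<And>y. y \<in> Rstar \<Longrightarrow> f y = g y"
  shows "f = g"
proof
  fix x
  have "cmod (f x - g x) \<le> 0"
    by (rule norm_le_from_shifted_Rstar[of x _ "{0}" UNIV])
      (use assms in \<open>auto intro!: continuous_intros\<close>)
  then show "f x = g x" by simp
qed

section \<open>Derivative bounds through difference quotients\<close>

lemma pdiff_scaleR:
  assumes "G differentiable (at z)"
  shows "frechet_derivative G (at z) (s *\<^sub>R axis i 1) = of_real s * pdiff i G z"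
  using linear_scale[OF has_derivative_linear[OF frechet_derivative_works[THEN iffD1, OF assms]]]
  by (simp add: pdiff_def scaleR_conv_of_real)

lemma norm_diff_axis_le:
  fixes G :: "real^'d::finite \<Rightarrow> complex"
  assumes dG: "\<And>z. G differentiable (at z)" and bound: "\<And>z. cmod (pdiff i G z) \<le> c"
  shows "cmod (G (y + h *\<^sub>R axis i 1) - G y) \<le> c * \<bar>h\<bar>"
proof -
  let ?f' = "\<lambda>t s. frechet_derivative G (at (y + t *\<^sub>R axis i 1)) (s *\<^sub>R axis i 1)"
  have "0 \<le> c" using bound[of y] norm_ge_zero order_trans by blast
  have "((\<lambda>t. G (y + t *\<^sub>R axis i 1)) has_derivative ?f' t) (at t within UNIV)" for t
  proof -
    have "((\<lambda>t. y + t *\<^sub>R axis i 1) has_derivative (\<lambda>s. s *\<^sub>R axis i 1)) (at t)"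
      by (intro derivative_eq_intros) auto
    from has_derivative_compose[OF this frechet_derivative_works[THEN iffD1, OF dG]]
    show ?thesis by simp
  qed
  moreover have "onorm (?f' t) \<le> c" for t
  proof (rule onorm_bound[OF \<open>0 \<le> c\<close>])
    fix s :: real
    show "norm (?f' t s) \<le> c * norm s"
      using mult_right_mono[OF bound[of "y + t *\<^sub>R axis i 1"] abs_ge_zero[of s]]
      by (simp add: pdiff_scaleR[OF dG] norm_mult mult.commute)
  qed
  ultimately have "norm (G (y + h *\<^sub>R axis i 1) - G (y + 0 *\<^sub>R axis i 1)) \<le> c * norm (h - 0)"
    by (intro differentiable_bound[OF convex_UNIV]) auto
  then show ?thesis by simp
qed

lemma norm_pdiff_le:
  fixes G :: "real^'d::finite \<Rightarrow> complex"
  assumes dG: "G differentiable (at y)"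
    and bound: "\<And>h. cmod (G (y + h *\<^sub>R axis i 1) - G y) \<le> c * \<bar>h\<bar>"
  shows "cmod (pdiff i G y) \<le> c"
proof (rule field_le_epsilon)
  fix e :: real assume "0 < e"
  let ?G' = "frechet_derivative G (at y)"
  have "(G has_derivative ?G') (at y)" using dG frechet_derivative_works by blast
  then obtain d where "d > 0"
    and d: "\<And>z. norm (z - y) < d \<Longrightarrow> cmod (G z - G y - ?G' (z - y)) \<le> e * norm (z - y)"
    using \<open>0 < e\<close> unfolding has_derivative_at_alt by blast
  define h where "h = d / 2"
  have "h > 0" "norm ((y + h *\<^sub>R axis i 1) - y) < d" using \<open>d > 0\<close> by (auto simp: h_def)
  let ?\<Delta> = "G (y + h *\<^sub>R axis i 1) - G y"
  have "cmod (of_real h * pdiff i G y) \<le> cmod ?\<Delta> + cmod (?\<Delta> - ?G' (h *\<^sub>R axis i 1))"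
    using norm_triangle_ineq4[of ?\<Delta> "?\<Delta> - of_real h * pdiff i G y"] by (simp add: pdiff_scaleR[OF dG])
  also have "\<dots> \<le> c * h + e * h"
    using bound[of h] d[OF \<open>norm _ < d\<close>] \<open>h > 0\<close> by (intro add_mono) auto
  finally have "h * cmod (pdiff i G y) \<le> h * (c + e)"
    using \<open>h > 0\<close> by (simp add: norm_mult algebra_simps)
  then show "cmod (pdiff i G y) \<le> c + e" using \<open>h > 0\<close> by simp
qed

definition fdiff :: "'d::finite \<Rightarrow> real \<Rightarrow> (real^'d \<Rightarrow> complex) \<Rightarrow> (real^'d \<Rightarrow> complex)" where
  "fdiff i h g = (\<lambda>y. g (y + h *\<^sub>R axis i 1) - g y)"

text \<open>A list of pairs \<open>(i, h)\<close> is a multi-index together with step sizes; \<open>fdiff_nodes ps\<close> are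
  the offsets at which \<open>fdiffs ps g y\<close> samples \<open>g\<close> around \<open>y\<close>.\<close>

fun fdiffs :: "('d::finite \<times> real) list \<Rightarrow> (real^'d \<Rightarrow> complex) \<Rightarrow> (real^'d \<Rightarrow> complex)" where
  "fdiffs [] g = g"
| "fdiffs (p # ps) g = fdiffs ps (fdiff (fst p) (snd p) g)"

fun fdiff_nodes :: "('d::finite \<times> real) list \<Rightarrow> (real^'d) set" where
  "fdiff_nodes [] = {0}"
| "fdiff_nodes (p # ps) = fdiff_nodes ps \<union> (\<lambda>a. a + snd p *\<^sub>R axis (fst p) 1) ` fdiff_nodes ps"

lemma finite_fdiff_nodes: "finite (fdiff_nodes ps)"
  by (induction ps) auto

lemma tendsto_fdiffs:
  assumes "\<forall>a\<in>fdiff_nodes ps. (\<lambda>n. G n (y + a)) \<longlonglongrightarrow> g (y + a)"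
  shows "(\<lambda>n. fdiffs ps (G n) y) \<longlonglongrightarrow> fdiffs ps g y"
  using assms
proof (induction ps arbitrary: G g)
  case (Cons p ps)
  have "(\<lambda>n. fdiff (fst p) (snd p) (G n) (y + a)) \<longlonglongrightarrow> fdiff (fst p) (snd p) g (y + a)"
    if "a \<in> fdiff_nodes ps" for a
    using Cons.prems that unfolding fdiff_def by (auto simp: add.assoc intro!: tendsto_diff)
  then show ?case using Cons.IH by simp
qed simp

lemma continuous_fdiffs:
  assumes "\<And>x. continuous (at x) g"
  shows "continuous (at x) (fdiffs ps g)"
  using assms
proof (induction ps arbitrary: g)
  case (Cons p ps)
  have "continuous (at x) (fdiff (fst p) (snd p) g)" for x
    unfolding fdiff_def
    by (intro continuous_intros continuous_at_compose[of x "\<lambda>y. y + snd p *\<^sub>R axis (fst p) 1" g, unfolded o_def])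
       (auto intro!: continuous_intros Cons.prems)
  then show ?case using Cons.IH by simp
qed simp

lemma fdiff_lincomb: "fdiff i h g = (\<lambda>y. 1 * g (y + h *\<^sub>R axis i 1) + (-1) * g y)"
  by (simp add: fdiff_def)

lemma smooth_fdiff: "smooth g \<Longrightarrow> smooth (fdiff i h g)"
  unfolding fdiff_lincomb by (intro smooth_lincomb smooth_translate)

lemma Dmulti_fdiff:
  assumes "smooth g" shows "Dmulti is (fdiff i h g) = fdiff i h (Dmulti is g)"
proof -
  have "Dmulti is (\<lambda>y. 1 * g (y + h *\<^sub>R axis i 1) + (-1) * g y)
      = (\<lambda>y. 1 * Dmulti is (\<lambda>y. g (y + h *\<^sub>R axis i 1)) y + (-1) * Dmulti is g y)"
    by (rule Dmulti_lincomb[OF smooth_translate[OF assms] assms])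
  then show ?thesis by (simp add: fdiff_def Dmulti_translate[OF assms])
qed

lemma norm_fdiffs_le:
  assumes "smooth g" "\<And>y. cmod (Dmulti (map fst ps) g y) \<le> c"
  shows "cmod (fdiffs ps g y) \<le> c * (\<Prod>p\<leftarrow>ps. \<bar>snd p\<bar>)"
  using assms
proof (induction ps arbitrary: g c)
  case (Cons p ps)
  obtain i h where p: "p = (i, h)" by (cases p)
  have "cmod (fdiff i h (Dmulti (map fst ps) g) z) \<le> c * \<bar>h\<bar>" for z
    unfolding fdiff_def
    by (rule norm_diff_axis_le) (use Cons.prems p in \<open>auto simp: smooth_def\<close>)
  then have "cmod (Dmulti (map fst ps) (fdiff i h g) z) \<le> c * \<bar>h\<bar>" for z
    by (simp add: Dmulti_fdiff[OF Cons.prems(1)])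
  from Cons.IH[OF smooth_fdiff[OF Cons.prems(1)] this]
  show ?case using p by (simp add: mult_ac)
qed simp

lemma norm_Dmulti_le_from_fdiffs:
  assumes "smooth g"
    and "\<And>ps y. map fst ps = is \<Longrightarrow> cmod (fdiffs ps g y) \<le> c * (\<Prod>p\<leftarrow>ps. \<bar>snd p\<bar>)"
  shows "cmod (Dmulti is g y) \<le> c"
  using assms
proof (induction "is" arbitrary: g c y)
  case Nil
  from Nil.prems(2)[of "[]" y] show ?case by simp
next
  case (Cons i "is")
  have "cmod (Dmulti is (fdiff i h g) y) \<le> c * \<bar>h\<bar>" for h
  proof (rule Cons.IH[OF smooth_fdiff[OF Cons.prems(1)]])
    fix ps :: "(_ \<times> real) list" and z assume "map fst ps = is"
    then show "cmod (fdiffs ps (fdiff i h g) z) \<le> c * \<bar>h\<bar> * (\<Prod>p\<leftarrow>ps. \<bar>snd p\<bar>)"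
      using Cons.prems(2)[of "(i, h) # ps" z] by (simp add: mult_ac)
  qed
  then have "cmod (Dmulti is g (y + h *\<^sub>R axis i 1) - Dmulti is g y) \<le> c * \<bar>h\<bar>" for h
    unfolding Dmulti_fdiff[OF Cons.prems(1)] by (simp add: fdiff_def)
  moreover have "Dmulti is g differentiable (at y)"
    using Cons.prems(1) by (simp add: smooth_def)
  ultimately show ?case
    by (simp add: norm_pdiff_le)
qed

section \<open>The complete metric space \<open>DK K\<close>\<close>

definition deriv_weight :: "'d list \<Rightarrow> real" where
  "deriv_weight is = 1 / real (Suc (length is))"

text \<open>Truncating the derivative of order \<open>\<alpha>\<close> at a weight tending to \<open>0\<close> with \<open>|\<alpha>|\<close> makes a single
  supremum metrize the uniform convergence of all derivatives.\<close>

definition dK :: "(real^'d::finite \<Rightarrow> complex) \<Rightarrow> (real^'d \<Rightarrow> complex) \<Rightarrow> real" where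
  "dK \<phi> \<psi> = (SUP p :: 'd list \<times> (real^'d).
     min (deriv_weight (fst p)) (cmod (Dmulti (fst p) \<phi> (snd p) - Dmulti (fst p) \<psi> (snd p))))"

definition DK :: "(real^'d::finite) set \<Rightarrow> (real^'d \<Rightarrow> complex) set" where
  "DK K = {\<phi>. test_fun \<phi> \<and> tsupport \<phi> \<subseteq> K}"

definition derivs_uniform_limit :: "(nat \<Rightarrow> real^'d::finite \<Rightarrow> complex) \<Rightarrow> (real^'d \<Rightarrow> complex) \<Rightarrow> bool" where
  "derivs_uniform_limit \<sigma> \<phi> \<longleftrightarrow> (\<forall>is. uniform_limit UNIV (\<lambda>n. Dmulti is (\<sigma> n)) (Dmulti is \<phi>) sequentially)"

lemma deriv_weight_pos: "0 < deriv_weight is"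
  by (simp add: deriv_weight_def)

lemma dK_term_le:
  fixes \<phi> \<psi> :: "real^'d::finite \<Rightarrow> complex"
  shows "min (deriv_weight is) (cmod (Dmulti is \<phi> x - Dmulti is \<psi> x)) \<le> dK \<phi> \<psi>"
proof -
  have "bdd_above (range (\<lambda>p :: 'd list \<times> (real^'d).
      min (deriv_weight (fst p)) (cmod (Dmulti (fst p) \<phi> (snd p) - Dmulti (fst p) \<psi> (snd p)))))"
    by (rule bdd_aboveI[of _ 1]) (auto simp: deriv_weight_def min.coboundedI1)
  from cSUP_upper[OF UNIV_I this, of "(is, x)"] show ?thesis
    by (simp add: dK_def)
qed

lemma dK_le: "(\<And>is x. min (deriv_weight is) (cmod (Dmulti is \<phi> x - Dmulti is \<psi> x)) \<le> B) \<Longrightarrow> dK \<phi> \<psi> \<le> B"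
  unfolding dK_def by (rule cSUP_least) auto

lemma dK_less_imp_norm_Dmulti_diff_less:
  "dK \<phi> \<psi> < min e (deriv_weight is) \<Longrightarrow> cmod (Dmulti is \<phi> x - Dmulti is \<psi> x) < e"
  using dK_term_le[of "is" \<phi> x \<psi>] by (auto simp: min_def split: if_splits)

lemma dK_nonneg: "0 \<le> dK \<phi> \<psi>"
  using dK_term_le[of "[]" \<phi> 0 \<psi>] deriv_weight_pos[of "[]"] by (smt (verit) norm_ge_zero)

lemma dK_commute: "dK \<phi> \<psi> = dK \<psi> \<phi>"
  unfolding dK_def by (simp add: norm_minus_commute)

lemma dK_eq_0_iff: "dK \<phi> \<psi> = 0 \<longleftrightarrow> \<phi> = \<psi>"
proof
  assume "dK \<phi> \<psi> = 0"
  show "\<phi> = \<psi>"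
  proof
    fix x
    have "cmod (Dmulti [] \<phi> x - Dmulti [] \<psi> x) < e" if "e > 0" for e
      using \<open>dK \<phi> \<psi> = 0\<close> that deriv_weight_pos[of "[]"]
      by (intro dK_less_imp_norm_Dmulti_diff_less) simp
    then show "\<phi> x = \<psi> x"
      by (metis Dmulti.simps(1) eq_iff_diff_eq_0 less_irrefl zero_less_norm_iff)
  qed
next
  assume "\<phi> = \<psi>"
  then show "dK \<phi> \<psi> = 0"
    by (intro order_antisym dK_le dK_nonneg) (simp add: deriv_weight_pos less_imp_le)
qed

lemma dK_triangle:
  fixes \<phi> \<psi> \<rho> :: "real^'d::finite \<Rightarrow> complex"
  shows "dK \<phi> \<rho> \<le> dK \<phi> \<psi> + dK \<psi> \<rho>"
proof (rule dK_le)
  fix "is" :: "'d list" and x :: "real^'d"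
  let ?w = "deriv_weight is" and ?D = "\<lambda>f. Dmulti is f x"
  have "cmod (?D \<phi> - ?D \<rho>) \<le> cmod (?D \<phi> - ?D \<psi>) + cmod (?D \<psi> - ?D \<rho>)"
    by (rule norm_diff_triangle_ineq[THEN order_trans[rotated]]) simp
  moreover have "min ?w c \<le> min ?w a + min ?w b" if "0 \<le> a" "0 \<le> b" "c \<le> a + b" for a b c
    using that deriv_weight_pos[of "is"] by (auto simp: min_def)
  ultimately have "min ?w (cmod (?D \<phi> - ?D \<rho>)) \<le> min ?w (cmod (?D \<phi> - ?D \<psi>)) + min ?w (cmod (?D \<psi> - ?D \<rho>))"
    by simp
  also have "\<dots> \<le> dK \<phi> \<psi> + dK \<psi> \<rho>" by (intro add_mono dK_term_le)
  finally show "min ?w (cmod (?D \<phi> - ?D \<rho>)) \<le> dK \<phi> \<psi> + dK \<psi> \<rho>" .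
qed

lemma Metric_space_DK: "Metric_space (DK K) dK"
  by unfold_locales (auto simp: dK_nonneg dK_commute dK_eq_0_iff dK_triangle)

lemma tendsto_dK_imp_derivs_uniform_limit:
  fixes \<sigma> :: "nat \<Rightarrow> real^'d::finite \<Rightarrow> complex"
  assumes "(\<lambda>n. dK (\<sigma> n) \<phi>) \<longlonglongrightarrow> 0"
  shows "derivs_uniform_limit \<sigma> \<phi>"
  unfolding derivs_uniform_limit_def uniform_limit_iff
proof (intro allI impI)
  fix "is" :: "'d list" and e :: real assume "e > 0"
  then have "eventually (\<lambda>n. dK (\<sigma> n) \<phi> < min e (deriv_weight is)) sequentially"
    using deriv_weight_pos by (intro order_tendstoD(2)[OF assms]) simp
  then show "\<forall>\<^sub>F n in sequentially. \<forall>x\<in>UNIV. dist (Dmulti is (\<sigma> n) x) (Dmulti is \<phi> x) < e"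
    by eventually_elim (simp add: dist_norm dK_less_imp_norm_Dmulti_diff_less)
qed

text \<open>Only the finitely many derivatives of order below \<open>N\<close> matter up to \<open>1 / (N + 1)\<close>.\<close>

lemma derivs_uniform_limit_imp_tendsto_dK:
  fixes \<sigma> :: "nat \<Rightarrow> real^'d::finite \<Rightarrow> complex"
  assumes "derivs_uniform_limit \<sigma> \<phi>"
  shows "(\<lambda>n. dK (\<sigma> n) \<phi>) \<longlonglongrightarrow> 0"
proof (rule order_tendstoI)
  fix e :: real assume "0 < e"
  obtain N :: nat where N: "1 / real (Suc N) < e / 2"
    using \<open>0 < e\<close> by (metis half_gt_zero_iff nat_approx_posE)
  define L where "L = {xs :: 'd list. set xs \<subseteq> UNIV \<and> length xs \<le> N}"
  have "finite L" unfolding L_def by (rule finite_lists_length_le) simp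
  have "\<forall>is\<in>L. \<forall>\<^sub>F n in sequentially. \<forall>x\<in>UNIV. dist (Dmulti is (\<sigma> n) x) (Dmulti is \<phi> x) < e / 2"
    using assms[unfolded derivs_uniform_limit_def uniform_limit_iff] half_gt_zero[OF \<open>0 < e\<close>]
    by blast
  from eventually_ball_finite[OF \<open>finite L\<close> this]
  show "\<forall>\<^sub>F n in sequentially. dK (\<sigma> n) \<phi> < e"
  proof eventually_elim
    case (elim n)
    have "dK (\<sigma> n) \<phi> \<le> e / 2"
    proof (rule dK_le)
      fix "is" x
      show "min (deriv_weight is) (cmod (Dmulti is (\<sigma> n) x - Dmulti is \<phi> x)) \<le> e / 2"
      proof (cases "is \<in> L")
        case True
        then have "cmod (Dmulti is (\<sigma> n) x - Dmulti is \<phi> x) < e / 2"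
          using elim by (simp add: dist_norm)
        then show ?thesis by (simp add: min.coboundedI2)
      next
        case False
        then have "deriv_weight is \<le> 1 / real (Suc N)"
          unfolding deriv_weight_def L_def by (intro divide_left_mono) auto
        then show ?thesis using N by (simp add: min.coboundedI1)
      qed
    qed
    then show ?case using \<open>0 < e\<close> by simp
  qed
next
  fix e :: real assume "e < 0"
  then show "\<forall>\<^sub>F n in sequentially. e < dK (\<sigma> n) \<phi>"
    by (intro always_eventually allI less_le_trans[OF _ dK_nonneg])
qed

lemma linear_vec_expansion:
  fixes F :: "real^'d::finite \<Rightarrow> complex"
  assumes "linear F"
  shows "F h = (\<Sum>j\<in>UNIV. of_real (h $ j) * F (axis j 1))"
proof -
  have "F h = F (\<Sum>j\<in>UNIV. (h $ j) *\<^sub>R axis j 1)"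
    using basis_expansion[of h] by (simp add: scalar_mult_eq_scaleR)
  also have "\<dots> = (\<Sum>j\<in>UNIV. F ((h $ j) *\<^sub>R axis j 1))"
    by (rule linear_sum[OF assms])
  also have "\<dots> = (\<Sum>j\<in>UNIV. of_real (h $ j) * F (axis j 1))"
    by (rule sum.cong[OF refl], subst linear_scale[OF assms]) (simp add: scaleR_conv_of_real)
  finally show ?thesis .
qed

lemma norm_linear_minus_expansion_le:
  fixes F :: "real^'d::finite \<Rightarrow> complex" and e :: real
  assumes "linear F" "\<And>j. cmod (F (axis j 1) - g j) \<le> e"
  shows "cmod (F h - (\<Sum>j\<in>UNIV. of_real (h $ j) * g j)) \<le> CARD('d) * e * norm h"
proof -
  have "cmod (F h - (\<Sum>j\<in>UNIV. of_real (h $ j) * g j))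
      = cmod (\<Sum>j\<in>UNIV. of_real (h $ j) * (F (axis j 1) - g j))"
    by (simp add: linear_vec_expansion[OF assms(1), of h] sum_subtractf algebra_simps)
  also have "\<dots> \<le> (\<Sum>j\<in>(UNIV::'d set). norm h * e)"
    using assms(2) component_le_norm_cart[of h]
    by (intro norm_sum[THEN order_trans] sum_mono) (simp add: norm_mult mult_mono)
  finally show ?thesis by (simp add: mult_ac)
qed

lemma frechet_derivative_Dmulti_uniform_approx:
  fixes \<sigma> :: "nat \<Rightarrow> real^'d::finite \<Rightarrow> complex"
  assumes smooth: "\<And>n. smooth (\<sigma> n)"
    and lim: "\<And>is. uniform_limit UNIV (\<lambda>n. Dmulti is (\<sigma> n)) (G is) sequentially"
    and "e > 0"
  shows "\<forall>\<^sub>F n in sequentially. \<forall>x\<in>UNIV. \<forall>h.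
    norm (frechet_derivative (Dmulti is (\<sigma> n)) (at x) h - (\<Sum>j\<in>UNIV. of_real (h $ j) * G (j # is) x))
      \<le> e * norm h"
proof -
  have "e / CARD('d) > 0" using \<open>e > 0\<close> by simp
  have "\<forall>\<^sub>F n in sequentially.
      \<forall>j. \<forall>x\<in>UNIV. dist (Dmulti (j # is) (\<sigma> n) x) (G (j # is) x) < e / CARD('d)"
  proof (rule eventually_all_finite)
    fix j
    show "\<forall>\<^sub>F n in sequentially.
        \<forall>x\<in>UNIV. dist (Dmulti (j # is) (\<sigma> n) x) (G (j # is) x) < e / CARD('d)"
      using lim[of "j # is", unfolded uniform_limit_iff] \<open>e / CARD('d) > 0\<close> by blast
  qed
  then show ?thesis
  proof eventually_elim
    case (elim n)
    let ?D = "\<lambda>x. frechet_derivative (Dmulti is (\<sigma> n)) (at x)"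
    have "norm (?D x h - (\<Sum>j\<in>UNIV. of_real (h $ j) * G (j # is) x)) \<le> CARD('d) * (e / CARD('d)) * norm h"
      for x h
    proof -
      have "linear (?D x)"
        using smooth_has_derivative[OF smooth] by (rule has_derivative_linear)
      moreover have "cmod (?D x (axis j 1) - G (j # is) x) \<le> e / CARD('d)" for j
        using elim by (simp add: pdiff_def dist_norm less_imp_le)
      ultimately show ?thesis by (rule norm_linear_minus_expansion_le)
    qed
    then show ?case by simp
  qed
qed

lemma has_derivative_uniform_limit_Dmulti:
  fixes \<sigma> :: "nat \<Rightarrow> real^'d::finite \<Rightarrow> complex"
  assumes smooth: "\<And>n. smooth (\<sigma> n)"
    and lim: "\<And>is. uniform_limit UNIV (\<lambda>n. Dmulti is (\<sigma> n)) (G is) sequentially"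
  shows "(G is has_derivative (\<lambda>h. \<Sum>j\<in>UNIV. of_real (h $ j) * G (j # is) x)) (at x)"
proof -
  have pointwise: "(\<lambda>n. Dmulti is (\<sigma> n) x) \<longlonglongrightarrow> G is x" for "is" x
    using tendsto_uniform_limitI[OF lim] by blast
  have "(Dmulti is (\<sigma> n) has_derivative frechet_derivative (Dmulti is (\<sigma> n)) (at x)) (at x within UNIV)"
    for n x
    using smooth_has_derivative[OF smooth] by simp
  from has_derivative_sequence[OF convex_UNIV this frechet_derivative_Dmulti_uniform_approx[OF smooth lim]
      UNIV_I pointwise]
  obtain g where g: "\<And>x. (\<lambda>n. Dmulti is (\<sigma> n) x) \<longlonglongrightarrow> g x
      \<and> (g has_derivative (\<lambda>h. \<Sum>j\<in>UNIV. of_real (h $ j) * G (j # is) x)) (at x)"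
    by blast
  have "g = G is"
    using g pointwise LIMSEQ_unique by blast
  then show ?thesis using g[of x] by simp
qed

lemma smooth_uniform_limit_Dmulti:
  fixes \<sigma> :: "nat \<Rightarrow> real^'d::finite \<Rightarrow> complex"
  assumes "\<And>n. smooth (\<sigma> n)"
    and "\<And>is. uniform_limit UNIV (\<lambda>n. Dmulti is (\<sigma> n)) (G is) sequentially"
  shows "Dmulti is (G []) = G is" and "smooth (G [])"
proof -
  have pdiff_G: "pdiff i (G is) x = G (i # is) x" for i "is" x
  proof -
    have "pdiff i (G is) x = (\<Sum>j\<in>UNIV. of_real (axis i 1 $ j) * G (j # is) x)"
      using pdiff_has_derivative[OF has_derivative_uniform_limit_Dmulti[OF assms]] by simp
    also have "\<dots> = (\<Sum>j\<in>UNIV. if j = i then G (j # is) x else 0)"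
      by (rule sum.cong) (auto simp: axis_def)
    finally show ?thesis by simp
  qed
  show Dmulti_G: "Dmulti is (G []) = G is" for "is"
    by (induction "is") (auto simp: pdiff_G)
  show "smooth (G [])"
    unfolding smooth_def Dmulti_G using has_derivative_uniform_limit_Dmulti[OF assms] differentiable_def
    by blast
qed

lemma uniformly_Cauchy_on_Dmulti:
  assumes "\<And>\<epsilon>. \<epsilon> > 0 \<Longrightarrow> \<exists>N. \<forall>n n'. N \<le> n \<longrightarrow> N \<le> n' \<longrightarrow> dK (\<sigma> n) (\<sigma> n') < \<epsilon>"
  shows "uniformly_Cauchy_on UNIV (\<lambda>n. Dmulti is (\<sigma> n))"
  unfolding uniformly_Cauchy_on_def
proof (intro allI impI)
  fix e :: real assume "e > 0"
  then have "min e (deriv_weight is) > 0" using deriv_weight_pos by simp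
  then obtain N where N: "\<And>n n'. N \<le> n \<Longrightarrow> N \<le> n' \<Longrightarrow> dK (\<sigma> n) (\<sigma> n') < min e (deriv_weight is)"
    using assms by blast
  show "\<exists>M. \<forall>x\<in>UNIV. \<forall>m\<ge>M. \<forall>n\<ge>M. dist (Dmulti is (\<sigma> m) x) (Dmulti is (\<sigma> n) x) < e"
    by (auto simp: dist_norm intro!: exI[of _ N] dK_less_imp_norm_Dmulti_diff_less N)
qed

lemma tsupport_pointwise_limit_subset:
  assumes "closed K" "\<And>n. tsupport (\<sigma> n) \<subseteq> K" "\<And>x. (\<lambda>n. \<sigma> n x) \<longlonglongrightarrow> \<phi> x"
  shows "tsupport \<phi> \<subseteq> K"
proof (rule tsupport_subset_closed[OF assms(1)])
  fix x assume "x \<notin> K"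
  then have "\<sigma> n x = 0" for n
    using assms(2) notin_tsupport by blast
  then have "(\<lambda>n. \<sigma> n x) \<longlonglongrightarrow> 0" by simp
  then show "\<phi> x = 0" using assms(3)[of x] LIMSEQ_unique by blast
qed

lemma mcomplete_DK:
  fixes K :: "(real^'d::finite) set"
  assumes "compact K"
  shows "Metric_space.mcomplete (DK K) dK"
  unfolding Metric_space.mcomplete_def[OF Metric_space_DK] Metric_space.MCauchy_def[OF Metric_space_DK]
proof (intro allI impI)
  fix \<sigma> :: "nat \<Rightarrow> real^'d \<Rightarrow> complex"
  assume "range \<sigma> \<subseteq> DK K \<and> (\<forall>\<epsilon>>0. \<exists>N. \<forall>n n'. N \<le> n \<longrightarrow> N \<le> n' \<longrightarrow> dK (\<sigma> n) (\<sigma> n') < \<epsilon>)"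
  then have DK: "\<And>n. \<sigma> n \<in> DK K"
    and Cauchy: "\<And>\<epsilon>. \<epsilon> > 0 \<Longrightarrow> \<exists>N. \<forall>n n'. N \<le> n \<longrightarrow> N \<le> n' \<longrightarrow> dK (\<sigma> n) (\<sigma> n') < \<epsilon>"
    by auto
  have "\<exists>l. uniform_limit UNIV (\<lambda>n. Dmulti is (\<sigma> n)) l sequentially" for "is"
    using Cauchy_uniformly_convergent[OF uniformly_Cauchy_on_Dmulti[OF Cauchy]]
    unfolding uniformly_convergent_on_def .
  then obtain G where G: "\<And>is. uniform_limit UNIV (\<lambda>n. Dmulti is (\<sigma> n)) (G is) sequentially"
    by metis
  have smooth: "\<And>n. smooth (\<sigma> n)" using DK by (simp add: DK_def test_fun_def)
  note G_Dmulti = smooth_uniform_limit_Dmulti[OF smooth G]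
  have "tsupport (G []) \<subseteq> K"
  proof (rule tsupport_pointwise_limit_subset)
    show "closed K" using assms by (rule compact_imp_closed)
    show "tsupport (\<sigma> n) \<subseteq> K" for n using DK by (simp add: DK_def)
    show "(\<lambda>n. \<sigma> n x) \<longlonglongrightarrow> G [] x" for x
      using tendsto_uniform_limitI[OF G[of "[]"], of x] by simp
  qed
  then have "G [] \<in> DK K"
    using compact_tsupport_subset[OF assms] G_Dmulti(2) unfolding DK_def test_fun_def by blast
  moreover have "(\<lambda>n. dK (\<sigma> n) (G [])) \<longlonglongrightarrow> 0"
    using G by (intro derivs_uniform_limit_imp_tendsto_dK) (simp add: derivs_uniform_limit_def G_Dmulti)
  ultimately have "limitin (Metric_space.mtopology (DK K) dK) \<sigma> (G []) sequentially"
    using DK by (simp add: Metric_space.limitin_metric_dist_null[OF Metric_space_DK])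
  then show "\<exists>\<phi>. limitin (Metric_space.mtopology (DK K) dK) \<sigma> \<phi> sequentially" by blast
qed

lemma derivs_uniform_limit_lincomb:
  assumes "\<And>n. smooth (\<sigma> n)" "smooth \<phi>" "\<And>n. smooth (\<tau> n)" "smooth \<psi>"
    and "derivs_uniform_limit \<sigma> \<phi>" "derivs_uniform_limit \<tau> \<psi>"
  shows "derivs_uniform_limit (\<lambda>n x. a * \<sigma> n x + b * \<tau> n x) (\<lambda>x. a * \<phi> x + b * \<psi> x)"
  unfolding derivs_uniform_limit_def
proof
  fix "is"
  have "uniform_limit UNIV (\<lambda>n x. a * Dmulti is (\<sigma> n) x + b * Dmulti is (\<tau> n) x)
      (\<lambda>x. a * Dmulti is \<phi> x + b * Dmulti is \<psi> x) sequentially"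
    using assms(5,6) unfolding derivs_uniform_limit_def by (intro uniform_limit_intros) auto
  then show "uniform_limit UNIV (\<lambda>n. Dmulti is (\<lambda>x. a * \<sigma> n x + b * \<tau> n x))
      (Dmulti is (\<lambda>x. a * \<phi> x + b * \<psi> x)) sequentially"
    by (simp add: Dmulti_lincomb assms(1-4))
qed

lemma derivs_uniform_limit_null_scalar:
  assumes "test_fun \<rho>" "c \<longlonglongrightarrow> 0"
  shows "derivs_uniform_limit (\<lambda>j x. c j * \<rho> x) (\<lambda>x. 0)"
  unfolding derivs_uniform_limit_def
proof
  fix "is"
  have "uniform_limit UNIV (\<lambda>j x. c j) (\<lambda>x. 0) sequentially"
    using assms(2) by (auto simp: uniform_limit_iff dest: tendstoD)
  moreover have "bounded (range (Dmulti is \<rho>))"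
    using bounded_Dmulti[OF assms(1)] by (auto simp: bounded_iff)
  ultimately have "uniform_limit UNIV (\<lambda>j x. c j * Dmulti is \<rho> x) (\<lambda>x. 0 * Dmulti is \<rho> x) sequentially"
    by (intro uniform_lim_mult uniform_limit_const) auto
  then show "uniform_limit UNIV (\<lambda>j. Dmulti is (\<lambda>x. c j * \<rho> x)) (Dmulti is (\<lambda>x. 0)) sequentially"
    using assms(1) by (simp add: Dmulti_cmult Dmulti_zero test_fun_def)
qed

section \<open>Elementary properties of \<open>M_op\<close>\<close>

lemma
  assumes "T \<in> DH'" "test_fun \<phi>"
  shows M_op_test_fun: "test_fun (M_op T \<phi>)"
    and M_op_Rstar: "y \<in> Rstar \<Longrightarrow> M_op T \<phi> y = T (\<lambda>\<xi>. \<phi> (cmul \<xi> y))"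
proof -
  have "\<exists>g. test_fun g \<and> (\<forall>y\<in>Rstar. g y = T (\<lambda>\<xi>. \<phi> (cmul \<xi> y)))"
    using assms unfolding DH'_def by blast
  then have "test_fun (M_op T \<phi>) \<and> (\<forall>y\<in>Rstar. M_op T \<phi> y = T (\<lambda>\<xi>. \<phi> (cmul \<xi> y)))"
    unfolding M_op_def by (rule someI_ex)
  then show "test_fun (M_op T \<phi>)" "y \<in> Rstar \<Longrightarrow> M_op T \<phi> y = T (\<lambda>\<xi>. \<phi> (cmul \<xi> y))"
    by auto
qed

lemma distribution_lincomb:
  assumes "distribution T" "test_fun f" "test_fun g"
  shows "T (\<lambda>x. a * f x + b * g x) = a * T f + b * T g"
  using assms test_fun_cmult[OF assms(2)] test_fun_cmult[OF assms(3)]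
  unfolding distribution_def D_linear_def by simp

lemma M_op_lincomb:
  fixes f g :: "real^'d::finite \<Rightarrow> complex"
  assumes T: "T \<in> DH'" and f: "test_fun f" and g: "test_fun g"
  shows "M_op T (\<lambda>x. a * f x + b * g x) = (\<lambda>x. a * M_op T f x + b * M_op T g x)"
proof (rule continuous_eq_on_Rstar)
  have fg: "test_fun (\<lambda>x. a * f x + b * g x)" by (rule test_fun_lincomb[OF f g])
  show "continuous (at x) (M_op T (\<lambda>x. a * f x + b * g x))" for x
    by (rule test_fun_continuous[OF M_op_test_fun[OF T fg]])
  show "continuous (at x) (\<lambda>x. a * M_op T f x + b * M_op T g x)" for x
    by (intro continuous_intros test_fun_continuous M_op_test_fun T f g)
  fix y :: "real^'d" assume y: "y \<in> Rstar"
  have "distribution T" using T by (simp add: DH'_def)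
  from distribution_lincomb[OF this test_fun_dilate[OF f y] test_fun_dilate[OF g y]]
  show "M_op T (\<lambda>x. a * f x + b * g x) y = a * M_op T f y + b * M_op T g y"
    by (simp add: M_op_Rstar[OF T _ y] f g fg)
qed

lemma M_op_cmult: "T \<in> DH' \<Longrightarrow> test_fun f \<Longrightarrow> M_op T (\<lambda>x. c * f x) = (\<lambda>x. c * M_op T f x)"
  using M_op_lincomb[of T f f c 0] by simp

lemma DK_lincomb: "f \<in> DK K \<Longrightarrow> g \<in> DK K \<Longrightarrow> (\<lambda>x. a * f x + b * g x) \<in> DK K"
  using tsupport_lincomb[of a f b g] test_fun_lincomb[of f g a b] unfolding DK_def by blast

lemma DK_cmult: "f \<in> DK K \<Longrightarrow> (\<lambda>x. c * f x) \<in> DK K"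
  using DK_lincomb[of f K f c 0] by simp

lemma zero_in_DK: "(\<lambda>x. 0) \<in> DK K"
  unfolding DK_def using test_fun_zero by (simp add: tsupport_def)

text \<open>The only place where the continuity of \<open>T\<close> enters: dilation by \<open>y \<in> Rstar\<close> maps a
  sequence converging in \<open>DK K\<close> to a sequence converging in \<open>D\<close>.\<close>

lemma M_op_tendsto_Rstar:
  assumes T: "T \<in> DH'" and "compact K" and "\<And>n. \<sigma> n \<in> DK K" "\<phi> \<in> DK K"
    and lim: "derivs_uniform_limit \<sigma> \<phi>" and y: "y \<in> Rstar"
  shows "(\<lambda>n. M_op T (\<sigma> n) y) \<longlonglongrightarrow> M_op T \<phi> y"
proof -
  have tf: "test_fun (\<sigma> n)" "test_fun \<phi>" "tsupport (\<sigma> n) \<subseteq> K" for n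
    using assms(3,4) by (auto simp: DK_def)
  have "D_conv (\<lambda>n \<xi>. \<sigma> n (cmul \<xi> y)) (\<lambda>\<xi>. \<phi> (cmul \<xi> y))"
    unfolding D_conv_def
  proof (intro conjI allI exI)
    show "test_fun (\<lambda>\<xi>. \<sigma> n (cmul \<xi> y))" "test_fun (\<lambda>\<xi>. \<phi> (cmul \<xi> y))" for n
      using tf y by (auto intro: test_fun_dilate)
    show "compact ((\<lambda>x. cmul x (cinv y)) ` K)" by (rule compact_dilate_image[OF \<open>compact K\<close>])
    show "tsupport (\<lambda>\<xi>. \<sigma> n (cmul \<xi> y)) \<subseteq> (\<lambda>x. cmul x (cinv y)) ` K" for n
      using tsupport_dilate[OF y, of "\<sigma> n"] tf(3)[of n] by blast
    fix "is"
    have "uniform_limit UNIV (\<lambda>n. Dmulti is (\<sigma> n)) (Dmulti is \<phi>) sequentially"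
      using lim by (simp add: derivs_uniform_limit_def)
    from uniform_limit_compose'[OF this, of "\<lambda>\<xi>. cmul \<xi> y" UNIV]
    have "uniform_limit UNIV (\<lambda>n \<xi>. Dmulti is (\<sigma> n) (cmul \<xi> y)) (\<lambda>\<xi>. Dmulti is \<phi> (cmul \<xi> y)) sequentially"
      by simp
    then have "uniform_limit UNIV (\<lambda>n \<xi>. of_real (\<Prod>i\<leftarrow>is. y $ i) * Dmulti is (\<sigma> n) (cmul \<xi> y))
        (\<lambda>\<xi>. of_real (\<Prod>i\<leftarrow>is. y $ i) * Dmulti is \<phi> (cmul \<xi> y)) sequentially"
      by (rule bounded_linear.uniform_limit[OF bounded_linear_mult_right])
    then show "uniform_limit UNIV (\<lambda>n. Dmulti is (\<lambda>\<xi>. \<sigma> n (cmul \<xi> y)))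
        (Dmulti is (\<lambda>\<xi>. \<phi> (cmul \<xi> y))) sequentially"
      using tf by (simp add: Dmulti_dilate test_fun_def)
  qed
  moreover have "distribution T" using T by (simp add: DH'_def)
  ultimately have "(\<lambda>n. T (\<lambda>\<xi>. \<sigma> n (cmul \<xi> y))) \<longlonglongrightarrow> T (\<lambda>\<xi>. \<phi> (cmul \<xi> y))"
    unfolding distribution_def by blast
  then show ?thesis using M_op_Rstar[OF T _ y] tf by simp
qed

section \<open>Baire category argument\<close>

lemma vanishes_outside_ball_limit:
  fixes g :: "real^'d::finite \<Rightarrow> complex"
  assumes "\<And>x. continuous (at x) g"
    and "\<And>y. y \<in> Rstar \<Longrightarrow> (\<lambda>n. G n y) \<longlonglongrightarrow> g y"
    and "\<And>n y. norm y > R \<Longrightarrow> G n y = 0"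
    and "norm y > R"
  shows "g y = 0"
proof -
  have "cmod (g y) \<le> 0"
  proof (rule norm_le_from_shifted_Rstar[of y g "{0}" "{y. R < norm y}"])
    fix z :: "real^'d" assume "z \<in> {y. R < norm y}" "\<forall>a\<in>{0}. z + a \<in> Rstar"
    then have "(\<lambda>n. 0) \<longlonglongrightarrow> g z"
      using assms(2)[of z] assms(3)[of z] by simp
    then show "cmod (g z) \<le> 0" by (simp add: LIMSEQ_const_iff)
  qed (use assms in \<open>auto intro: open_Collect_less continuous_intros\<close>)
  then show ?thesis by simp
qed

lemma Dmulti_bound_limit:
  fixes g :: "real^'d::finite \<Rightarrow> complex"
  assumes "smooth g" "\<And>n. smooth (G n)"
    and lim: "\<And>y. y \<in> Rstar \<Longrightarrow> (\<lambda>n. G n y) \<longlonglongrightarrow> g y"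
    and bound: "\<And>n y. cmod (Dmulti is (G n) y) \<le> c"
  shows "cmod (Dmulti is g y) \<le> c"
proof (rule norm_Dmulti_le_from_fdiffs[OF assms(1)])
  fix ps :: "('d \<times> real) list" and z :: "real^'d" assume ps: "map fst ps = is"
  show "cmod (fdiffs ps g z) \<le> c * (\<Prod>p\<leftarrow>ps. \<bar>snd p\<bar>)"
  proof (rule norm_le_from_shifted_Rstar[of z _ "fdiff_nodes ps" UNIV])
    show "continuous (at z) (fdiffs ps g)"
      using continuous_Dmulti[OF assms(1), of _ "[]"] by (intro continuous_fdiffs) simp
    fix w :: "real^'d" assume "\<forall>a\<in>fdiff_nodes ps. w + a \<in> Rstar"
    then have "(\<lambda>n. fdiffs ps (G n) w) \<longlonglongrightarrow> fdiffs ps g w"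
      using lim by (intro tendsto_fdiffs) blast
    moreover have "cmod (fdiffs ps (G n) w) \<le> c * (\<Prod>p\<leftarrow>ps. \<bar>snd p\<bar>)" for n
      using assms(2) bound ps by (intro norm_fdiffs_le) auto
    ultimately show "cmod (fdiffs ps g w) \<le> c * (\<Prod>p\<leftarrow>ps. \<bar>snd p\<bar>)"
      by (intro tendsto_upperbound[OF tendsto_norm] always_eventually) auto
  qed (auto simp: finite_fdiff_nodes)
qed

definition M_bounded :: "((real^'d::finite \<Rightarrow> complex) \<Rightarrow> complex) \<Rightarrow> (real^'d) set \<Rightarrow> nat \<Rightarrow> nat
    \<Rightarrow> (real^'d \<Rightarrow> complex) set" where
  "M_bounded T K k m = {\<phi> \<in> DK K. (\<forall>y. norm y > real m \<longrightarrow> M_op T \<phi> y = 0) \<and>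
     (\<forall>is. length is \<le> k \<longrightarrow> (\<forall>y. cmod (Dmulti is (M_op T \<phi>) y) \<le> real m))}"

lemma closedin_M_bounded:
  fixes K :: "(real^'d::finite) set"
  assumes T: "T \<in> DH'" and "compact K"
  shows "closedin (Metric_space.mtopology (DK K) dK) (M_bounded T K k m)"
  unfolding Metric_space.metric_closedin_iff_sequentially_closed[OF Metric_space_DK]
proof (intro conjI allI impI)
  show "M_bounded T K k m \<subseteq> DK K" by (auto simp: M_bounded_def)
  fix \<sigma> \<phi>
  assume "range \<sigma> \<subseteq> M_bounded T K k m \<and> limitin (Metric_space.mtopology (DK K) dK) \<sigma> \<phi> sequentially"
  then have \<sigma>: "\<And>n. \<sigma> n \<in> M_bounded T K k m" and "\<phi> \<in> DK K"
    and "(\<lambda>n. dK (\<sigma> n) \<phi>) \<longlonglongrightarrow> 0"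
    by (auto simp: Metric_space.limitin_metric_dist_null[OF Metric_space_DK])
  have \<sigma>_DK: "\<sigma> n \<in> DK K" for n using \<sigma> by (simp add: M_bounded_def)
  have lim: "(\<lambda>n. M_op T (\<sigma> n) y) \<longlonglongrightarrow> M_op T \<phi> y" if "y \<in> Rstar" for y
    using M_op_tendsto_Rstar[OF T \<open>compact K\<close> \<sigma>_DK \<open>\<phi> \<in> DK K\<close>
        tendsto_dK_imp_derivs_uniform_limit[OF \<open>(\<lambda>n. dK (\<sigma> n) \<phi>) \<longlonglongrightarrow> 0\<close>] that] .
  have test: "test_fun (M_op T \<phi>)" "test_fun (M_op T (\<sigma> n))" for n
    using M_op_test_fun[OF T] \<sigma>_DK \<open>\<phi> \<in> DK K\<close> by (auto simp: DK_def)
  have "M_op T \<phi> y = 0" if "norm y > real m" for y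
    using \<sigma> test that by (intro vanishes_outside_ball_limit[OF _ lim]) (auto simp: M_bounded_def test_fun_continuous)
  moreover have "cmod (Dmulti is (M_op T \<phi>) y) \<le> real m" if "length is \<le> k" for "is" y
    using \<sigma> test that by (intro Dmulti_bound_limit[OF _ _ lim]) (auto simp: M_bounded_def test_fun_def)
  ultimately show "\<phi> \<in> M_bounded T K k m"
    using \<open>\<phi> \<in> DK K\<close> by (simp add: M_bounded_def)
qed

lemma M_bounded_exhaust:
  fixes K :: "(real^'d::finite) set"
  assumes T: "T \<in> DH'" and "\<phi> \<in> DK K"
  shows "\<exists>m. \<phi> \<in> M_bounded T K k m"
proof -
  have test: "test_fun (M_op T \<phi>)" using M_op_test_fun[OF T] assms(2) by (simp add: DK_def)
  then have "bounded (tsupport (M_op T \<phi>))" by (simp add: test_fun_def compact_imp_bounded)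
  then obtain R where R: "\<And>y. y \<in> tsupport (M_op T \<phi>) \<Longrightarrow> norm y \<le> R"
    by (auto simp: bounded_iff)
  obtain B where B: "\<And>is y. cmod (Dmulti is (M_op T \<phi>) y) \<le> B is"
    using bounded_Dmulti[OF test] by metis
  define L where "L = {xs :: 'd list. set xs \<subseteq> UNIV \<and> length xs \<le> k}"
  have "finite L" unfolding L_def by (rule finite_lists_length_le) simp
  define m where "m = nat \<lceil>max R (Max (B ` L))\<rceil>"
  have m: "R \<le> real m" "Max (B ` L) \<le> real m"
    unfolding m_def by linarith+
  have "B is \<le> real m" if "length is \<le> k" for "is"
    using Max_ge[OF finite_imageI[OF \<open>finite L\<close>], of "B is" B] that m(2)
    unfolding L_def by fastforce
  moreover have "M_op T \<phi> y = 0" if "real m < norm y" for y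
    using R[of y] that notin_tsupport m(1) by fastforce
  ultimately have "\<phi> \<in> M_bounded T K k m"
    using assms(2) B order_trans by (fastforce simp: M_bounded_def)
  then show ?thesis ..
qed

lemma M_bounded_has_ball:
  fixes K :: "(real^'d::finite) set"
  assumes T: "T \<in> DH'" and "compact K"
  shows "\<exists>m \<phi>\<^sub>0 \<epsilon>. \<epsilon> > 0 \<and> \<phi>\<^sub>0 \<in> DK K \<and> (\<forall>\<psi>\<in>DK K. dK \<phi>\<^sub>0 \<psi> < \<epsilon> \<longrightarrow> \<psi> \<in> M_bounded T K k m)"
proof -
  interpret DK: Metric_space "DK K" dK by (rule Metric_space_DK)
  have "\<exists>m. DK.mtopology interior_of (M_bounded T K k m) \<noteq> {}"
  proof (rule ccontr)
    assume "\<nexists>m. DK.mtopology interior_of M_bounded T K k m \<noteq> {}"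
    then have "DK.mtopology interior_of \<Union>(range (M_bounded T K k)) = {}"
      using closedin_M_bounded[OF assms]
      by (intro DK.metric_Baire_category_alt[OF mcomplete_DK[OF \<open>compact K\<close>]]) auto
    moreover have "\<Union>(range (M_bounded T K k)) = DK K"
      using M_bounded_exhaust[OF T] by (auto simp: M_bounded_def)
    ultimately show False
      using interior_of_topspace[of DK.mtopology] zero_in_DK[of K] by simp
  qed
  then obtain m \<phi>\<^sub>0 where "\<phi>\<^sub>0 \<in> DK.mtopology interior_of M_bounded T K k m" by blast
  then obtain \<epsilon> where "\<phi>\<^sub>0 \<in> DK K" "\<epsilon> > 0" "DK.mball \<phi>\<^sub>0 \<epsilon> \<subseteq> M_bounded T K k m"
    using DK.in_interior_of_mball by blast
  then show ?thesis
    by (intro exI[of _ m] exI[of _ \<phi>\<^sub>0] exI[of _ \<epsilon>]) (auto simp: DK.in_mball)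
qed

lemma dK_add_left:
  assumes "smooth \<phi>" "smooth \<rho>"
  shows "dK \<phi> (\<lambda>x. \<phi> x + \<rho> x) = dK \<rho> (\<lambda>x. 0)"
proof -
  have "cmod (Dmulti is \<phi> x - Dmulti is (\<lambda>x. \<phi> x + \<rho> x) x) = cmod (Dmulti is \<rho> x - Dmulti is (\<lambda>x. 0) x)"
    for "is" x
    using Dmulti_lincomb[OF assms, of "is" 1 1] by (simp add: Dmulti_zero)
  then show ?thesis unfolding dK_def by simp
qed

lemma M_bounded_diff:
  fixes \<phi> \<psi> :: "real^'d::finite \<Rightarrow> complex"
  assumes T: "T \<in> DH'" and "\<psi> \<in> M_bounded T K k m" "\<phi> \<in> M_bounded T K k m"
  shows "(\<forall>y. norm y > real m \<longrightarrow> M_op T (\<lambda>x. \<psi> x - \<phi> x) y = 0) \<and>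
    (\<forall>is. length is \<le> k \<longrightarrow> (\<forall>y. cmod (Dmulti is (M_op T (\<lambda>x. \<psi> x - \<phi> x)) y) \<le> 2 * real m))"
proof -
  have test: "test_fun \<psi>" "test_fun \<phi>" using assms(2,3) by (auto simp: M_bounded_def DK_def)
  then have M: "M_op T (\<lambda>x. \<psi> x - \<phi> x) = (\<lambda>x. M_op T \<psi> x - M_op T \<phi> x)"
    using M_op_lincomb[OF T test, of 1 "-1"] by simp
  have "smooth (M_op T \<psi>)" "smooth (M_op T \<phi>)"
    using M_op_test_fun[OF T] test by (auto simp: test_fun_def)
  from Dmulti_lincomb[OF this, of _ 1 "-1"]
  have D: "Dmulti is (M_op T (\<lambda>x. \<psi> x - \<phi> x)) y = Dmulti is (M_op T \<psi>) y - Dmulti is (M_op T \<phi>) y"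
    for "is" y
    by (simp add: M)
  show ?thesis
  proof (intro conjI allI impI)
    fix y :: "real^'d" assume "real m < norm y"
    then show "M_op T (\<lambda>x. \<psi> x - \<phi> x) y = 0" using assms(2,3) by (simp add: M M_bounded_def)
  next
    fix "is" :: "'d list" and y :: "real^'d" assume "length is \<le> k"
    then have "cmod (Dmulti is (M_op T \<psi>) y) \<le> real m" "cmod (Dmulti is (M_op T \<phi>) y) \<le> real m"
      using assms(2,3) unfolding M_bounded_def by blast+
    then show "cmod (Dmulti is (M_op T (\<lambda>x. \<psi> x - \<phi> x)) y) \<le> 2 * real m"
      unfolding D using norm_triangle_ineq4[of "Dmulti is (M_op T \<psi>) y" "Dmulti is (M_op T \<phi>) y"]
      by linarith
  qed
qed

text \<open>Linearity moves the ball of \<open>M_bounded_has_ball\<close> to the origin.\<close>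

lemma M_op_bounded_near_0:
  fixes K :: "(real^'d::finite) set"
  assumes T: "T \<in> DH'" and "compact K"
  shows "\<exists>R B r. r > 0 \<and> (\<forall>\<rho>\<in>DK K. dK \<rho> (\<lambda>x. 0) < r \<longrightarrow>
     (\<forall>y. norm y > R \<longrightarrow> M_op T \<rho> y = 0) \<and>
     (\<forall>is. length is \<le> k \<longrightarrow> (\<forall>y. cmod (Dmulti is (M_op T \<rho>) y) \<le> B)))"
proof -
  obtain m \<phi>\<^sub>0 \<epsilon> where "\<epsilon> > 0" "\<phi>\<^sub>0 \<in> DK K"
    and ball: "\<And>\<psi>. \<psi> \<in> DK K \<Longrightarrow> dK \<phi>\<^sub>0 \<psi> < \<epsilon> \<Longrightarrow> \<psi> \<in> M_bounded T K k m"
    using M_bounded_has_ball[OF assms] by blast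
  have "(\<forall>y. norm y > real m \<longrightarrow> M_op T \<rho> y = 0) \<and>
     (\<forall>is. length is \<le> k \<longrightarrow> (\<forall>y. cmod (Dmulti is (M_op T \<rho>) y) \<le> 2 * real m))"
    if \<rho>: "\<rho> \<in> DK K" and "dK \<rho> (\<lambda>x. 0) < \<epsilon>" for \<rho>
  proof -
    have "(\<lambda>x. \<phi>\<^sub>0 x + \<rho> x) \<in> DK K"
      using DK_lincomb[OF \<open>\<phi>\<^sub>0 \<in> DK K\<close> \<rho>, of 1 1] by simp
    moreover have "dK \<phi>\<^sub>0 (\<lambda>x. \<phi>\<^sub>0 x + \<rho> x) < \<epsilon>"
      using \<open>\<phi>\<^sub>0 \<in> DK K\<close> \<rho> \<open>dK \<rho> (\<lambda>x. 0) < \<epsilon>\<close> by (simp add: dK_add_left DK_def test_fun_def)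
    moreover have "\<phi>\<^sub>0 \<in> M_bounded T K k m"
      using ball[OF \<open>\<phi>\<^sub>0 \<in> DK K\<close>] \<open>\<epsilon> > 0\<close> dK_eq_0_iff[of \<phi>\<^sub>0 \<phi>\<^sub>0] by simp
    ultimately have "(\<lambda>x. \<phi>\<^sub>0 x + \<rho> x) \<in> M_bounded T K k m" "\<phi>\<^sub>0 \<in> M_bounded T K k m"
      using ball by auto
    from M_bounded_diff[OF T this] show ?thesis by simp
  qed
  then show ?thesis using \<open>\<epsilon> > 0\<close> by blast
qed

lemma derivs_uniform_limit_cmult:
  assumes "\<And>n. smooth (\<sigma> n)" "smooth \<phi>" "derivs_uniform_limit \<sigma> \<phi>"
  shows "derivs_uniform_limit (\<lambda>n x. c * \<sigma> n x) (\<lambda>x. c * \<phi> x)"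
  using derivs_uniform_limit_lincomb[OF assms(1,2,1,2,3,3), of c 0] by simp

lemma M_op_support_uniform:
  fixes K :: "(real^'d::finite) set"
  assumes T: "T \<in> DH'" and "compact K"
  shows "\<exists>R. \<forall>\<rho>\<in>DK K. \<forall>y. norm y > R \<longrightarrow> M_op T \<rho> y = 0"
proof -
  obtain R r where "r > 0"
    and near_0: "\<And>\<rho>. \<rho> \<in> DK K \<Longrightarrow> dK \<rho> (\<lambda>x. 0) < r \<Longrightarrow> \<forall>y. norm y > R \<longrightarrow> M_op T \<rho> y = 0"
    using M_op_bounded_near_0[OF assms, of 0] by blast
  have "M_op T \<rho> y = 0" if \<rho>: "\<rho> \<in> DK K" and "norm y > R" for \<rho> y
  proof -
    define c where "c j = complex_of_real (1 / real (Suc j))" for j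
    have "c \<longlonglongrightarrow> 0"
      unfolding c_def using tendsto_of_real[OF LIMSEQ_inverse_real_of_nat, where 'a = complex]
      by (simp add: inverse_eq_divide)
    have "test_fun \<rho>" using \<rho> by (simp add: DK_def)
    from derivs_uniform_limit_imp_tendsto_dK[OF derivs_uniform_limit_null_scalar[OF this \<open>c \<longlonglongrightarrow> 0\<close>]]
    have "\<forall>\<^sub>F j in sequentially. dK (\<lambda>x. c j * \<rho> x) (\<lambda>x. 0) < r"
      using \<open>r > 0\<close> by (rule order_tendstoD(2))
    then obtain j where "dK (\<lambda>x. c j * \<rho> x) (\<lambda>x. 0) < r"
      by (auto simp: eventually_sequentially)
    with near_0[OF DK_cmult[OF \<rho>]] \<open>norm y > R\<close> have "M_op T (\<lambda>x. c j * \<rho> x) y = 0"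
      by blast
    then have "c j * M_op T \<rho> y = 0" using M_op_cmult[OF T \<open>test_fun \<rho>\<close>] by simp
    moreover have "c j \<noteq> 0" unfolding c_def of_real_eq_0_iff by simp
    ultimately show ?thesis by simp
  qed
  then show ?thesis by blast
qed

text \<open>Scaling a null sequence by a large constant keeps it eventually inside the neighbourhood
  of \<open>M_op_bounded_near_0\<close>.\<close>

lemma uniform_limit_Dmulti_M_op_null:
  fixes K :: "(real^'d::finite) set"
  assumes T: "T \<in> DH'" and "compact K" and DK: "\<And>n. \<sigma> n \<in> DK K"
    and lim: "derivs_uniform_limit \<sigma> (\<lambda>x. 0)"
  shows "uniform_limit UNIV (\<lambda>n. Dmulti is (M_op T (\<sigma> n))) (\<lambda>x. 0) sequentially"
  unfolding uniform_limit_iff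
proof (intro allI impI)
  fix e :: real assume "e > 0"
  obtain R B r where "r > 0" and near_0: "\<And>\<rho>. \<rho> \<in> DK K \<Longrightarrow> dK \<rho> (\<lambda>x. 0) < r \<Longrightarrow>
      \<forall>is'. length is' \<le> length is \<longrightarrow> (\<forall>y. cmod (Dmulti is' (M_op T \<rho>) y) \<le> B)"
    using M_op_bounded_near_0[OF T \<open>compact K\<close>, of "length is"] by blast
  define c where "c = complex_of_real ((\<bar>B\<bar> + 1) / e)"
  have c: "cmod c = (\<bar>B\<bar> + 1) / e"
    unfolding c_def norm_of_real using \<open>e > 0\<close> by simp
  have test: "test_fun (\<sigma> n)" for n using DK by (simp add: DK_def)
  have "derivs_uniform_limit (\<lambda>n x. c * \<sigma> n x) (\<lambda>x. c * 0)"
    using test test_fun_zero lim by (intro derivs_uniform_limit_cmult) (auto simp: test_fun_def)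
  then have "\<forall>\<^sub>F n in sequentially. dK (\<lambda>x. c * \<sigma> n x) (\<lambda>x. 0) < r"
    using \<open>r > 0\<close> by (intro order_tendstoD(2)[OF derivs_uniform_limit_imp_tendsto_dK]) simp_all
  then show "\<forall>\<^sub>F n in sequentially. \<forall>x\<in>UNIV. dist (Dmulti is (M_op T (\<sigma> n)) x) 0 < e"
  proof eventually_elim
    case (elim n)
    show ?case
    proof
      fix x
      have "smooth (M_op T (\<sigma> n))" using M_op_test_fun[OF T test] by (simp add: test_fun_def)
      then have "cmod c * cmod (Dmulti is (M_op T (\<sigma> n)) x) \<le> B"
        using near_0[OF DK_cmult[OF DK] elim] M_op_cmult[OF T test]
        by (simp add: Dmulti_cmult norm_mult)
      then have "cmod (Dmulti is (M_op T (\<sigma> n)) x) * (\<bar>B\<bar> + 1) \<le> B * e"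
        using \<open>e > 0\<close> unfolding c by (simp add: field_simps)
      moreover have "B * e < e * (\<bar>B\<bar> + 1)"
        using \<open>e > 0\<close> mult_strict_left_mono[of B "\<bar>B\<bar> + 1" e] by (simp add: mult.commute)
      ultimately have "cmod (Dmulti is (M_op T (\<sigma> n)) x) * (\<bar>B\<bar> + 1) < e * (\<bar>B\<bar> + 1)"
        by linarith
      then show "dist (Dmulti is (M_op T (\<sigma> n)) x) 0 < e"
        by (simp add: mult_less_cancel_right_pos[of "\<bar>B\<bar> + 1"] add_nonneg_pos)
    qed
  qed
qed

lemma uniform_limit_Dmulti_M_op:
  fixes K :: "(real^'d::finite) set"
  assumes T: "T \<in> DH'" and "compact K" and \<phi>: "\<And>n. \<phi> n \<in> DK K" and \<psi>: "\<psi> \<in> DK K"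
    and lim: "derivs_uniform_limit \<phi> \<psi>"
  shows "uniform_limit UNIV (\<lambda>n. Dmulti is (M_op T (\<phi> n))) (Dmulti is (M_op T \<psi>)) sequentially"
proof -
  have test: "test_fun (\<phi> n)" "test_fun \<psi>" for n using \<phi> \<psi> by (auto simp: DK_def)
  have smooth: "smooth (\<phi> n)" "smooth \<psi>" "smooth (M_op T (\<phi> n))" "smooth (M_op T \<psi>)" for n
    using test M_op_test_fun[OF T] by (auto simp: test_fun_def)
  have "derivs_uniform_limit (\<lambda>n x. 1 * \<phi> n x + (-1) * \<psi> x) (\<lambda>x. 1 * \<psi> x + (-1) * \<psi> x)"
    using smooth lim
    by (intro derivs_uniform_limit_lincomb) (auto simp: derivs_uniform_limit_def intro: uniform_limit_const)
  moreover have "(\<lambda>x. 1 * \<phi> n x + (-1) * \<psi> x) \<in> DK K" for n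
    by (rule DK_lincomb[OF \<phi> \<psi>])
  ultimately have "uniform_limit UNIV (\<lambda>n. Dmulti is (M_op T (\<lambda>x. \<phi> n x - \<psi> x))) (\<lambda>x. 0) sequentially"
    using uniform_limit_Dmulti_M_op_null[OF T \<open>compact K\<close>] by simp
  moreover have "Dmulti is (M_op T (\<lambda>x. \<phi> n x - \<psi> x))
      = (\<lambda>x. Dmulti is (M_op T (\<phi> n)) x - Dmulti is (M_op T \<psi>) x)" for n
    using M_op_lincomb[OF T test(1)[of n] test(2), of 1 "-1"]
      Dmulti_lincomb[OF smooth(3)[of n] smooth(4), of "is" 1 "-1"] by simp
  ultimately have "uniform_limit UNIV
      (\<lambda>n x. (Dmulti is (M_op T (\<phi> n)) x - Dmulti is (M_op T \<psi>) x) + Dmulti is (M_op T \<psi>) x)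
      (\<lambda>x. 0 + Dmulti is (M_op T \<psi>) x) sequentially"
    by (intro uniform_limit_add uniform_limit_const) simp
  then show ?thesis by simp
qed

lemma D_conv_DK:
  assumes "D_conv \<phi> \<psi>"
  obtains K where "compact K" "\<And>n. \<phi> n \<in> DK K" "\<psi> \<in> DK K" "derivs_uniform_limit \<phi> \<psi>"
proof -
  obtain K where "compact K" "\<And>n. tsupport (\<phi> n) \<subseteq> K"
    using assms by (auto simp: D_conv_def)
  with assms show thesis
    by (intro that[of "K \<union> tsupport \<psi>"])
      (auto simp: D_conv_def DK_def derivs_uniform_limit_def test_fun_def)
qed

theorem lemma4:
  fixes T :: "(real^'d::finite \<Rightarrow> complex) \<Rightarrow> complex"
  assumes "T \<in> DH'"
  shows "(\<forall>\<phi>. test_fun \<phi> \<longrightarrow> test_fun (M_op T \<phi>))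
       \<and> (\<forall>f g. test_fun f \<longrightarrow> test_fun g \<longrightarrow> M_op T (\<lambda>x. f x + g x) = (\<lambda>x. M_op T f x + M_op T g x))
       \<and> (\<forall>c f. test_fun f \<longrightarrow> M_op T (\<lambda>x. c * f x) = (\<lambda>x. c * M_op T f x))
       \<and> (\<forall>\<phi> \<psi>. D_conv \<phi> \<psi> \<longrightarrow> D_conv (\<lambda>n. M_op T (\<phi> n)) (M_op T \<psi>))"
proof (intro conjI allI impI)
  show "test_fun (M_op T \<phi>)" if "test_fun \<phi>" for \<phi>
    using M_op_test_fun[OF assms that] .
  show "M_op T (\<lambda>x. f x + g x) = (\<lambda>x. M_op T f x + M_op T g x)" if "test_fun f" "test_fun g" for f g
    using M_op_lincomb[OF assms that, of 1 1] by simp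
  show "M_op T (\<lambda>x. c * f x) = (\<lambda>x. c * M_op T f x)" if "test_fun f" for c f
    using M_op_cmult[OF assms that] .
  fix \<phi> :: "nat \<Rightarrow> real^'d \<Rightarrow> complex" and \<psi> assume "D_conv \<phi> \<psi>"
  then obtain K where K: "compact K" "\<And>n. \<phi> n \<in> DK K" "\<psi> \<in> DK K" "derivs_uniform_limit \<phi> \<psi>"
    using D_conv_DK by blast
  obtain R where R: "\<And>\<rho> y. \<rho> \<in> DK K \<Longrightarrow> norm y > R \<Longrightarrow> M_op T \<rho> y = 0"
    using M_op_support_uniform[OF assms \<open>compact K\<close>] by blast
  show "D_conv (\<lambda>n. M_op T (\<phi> n)) (M_op T \<psi>)"
    unfolding D_conv_def
  proof (intro conjI allI exI)
    show "test_fun (M_op T (\<phi> n))" "test_fun (M_op T \<psi>)" for n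
      using K M_op_test_fun[OF assms] by (auto simp: DK_def)
    show "compact (cball (0 :: real^'d) R)" by simp
    show "tsupport (M_op T (\<phi> n)) \<subseteq> cball 0 R" for n
      using R[OF K(2)] by (intro tsupport_subset_closed) auto
    show "uniform_limit UNIV (\<lambda>n. Dmulti is (M_op T (\<phi> n))) (Dmulti is (M_op T \<psi>)) sequentially" for "is"
      by (rule uniform_limit_Dmulti_M_op[OF assms K])
  qed
qed

end
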